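(* Let $\alpha$ be a real algebraic integer whose minimal polynomial over $\mathbb{Q}$ has degree $d\ge1$. Then for every positive integer $t$, $|K_t|=(2t+1)^d$, $|G_t|=(2t+1)^{2d}$, and the nonzero elements of $G_{2t}$ determine at least $(2t)^{2d}$ distinct directions, i.e. the set $\{\arg(w)\bmod \pi : w\in G_{2t}\setminus\{0\}\}\subseteq[0,\pi)$ has at least $(2t)^{2d}$ elements.
   Context: For a real number $r\ge0$, $K_r:=\{\sum_{k=0}^{d-1}a_k\alpha^k : a_k\in\mathbb{Z},\ |a_k|\le r\}$ and $G_r:=K_r+iK_r=\{u_1+iu_2: u_1,u_2\in K_r\}\subset\mathbb{C}$. *)

theory Defs
  imports "HOL-Analysis.Analysis" "HOL-Computational_Algebra.Polynomial" "HOL-Library.Real_Mod"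
begin

definition Kset :: "real \<Rightarrow> nat \<Rightarrow> real \<Rightarrow> real set" where
  "Kset \<alpha> d r = {(\<Sum>k<d. of_int (a k) * \<alpha> ^ k) | a :: nat \<Rightarrow> int. \<forall>k<d. real_of_int \<bar>a k\<bar> \<le> r}"

definition Gset :: "real \<Rightarrow> nat \<Rightarrow> real \<Rightarrow> complex set" where
  "Gset \<alpha> d r = {complex_of_real u1 + \<i> * complex_of_real u2 | u1 u2. u1 \<in> Kset \<alpha> d r \<and> u2 \<in> Kset \<alpha> d r}"

definition direction :: "complex \<Rightarrow> real" where
  "direction w = Arg w rmod pi"

end

theory Submission
  imports Defs "HOL-Computational_Algebra.Polynomial_Factorial" "HOL-Computational_Algebra.Field_as_Ring"
begin

text \<open>
  The map sending an integer coefficient vector \<open>a\<close> to \<open>\<Sum>k<d. a k * \<alpha>^k\<close> is injective, because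
  \<open>1, \<alpha>, \<dots>, \<alpha>^(d-1)\<close> are linearly independent over \<open>\<rat>\<close> when the minimal polynomial of \<open>\<alpha>\<close> has
  degree \<open>d\<close>; this gives \<open>|K\<^sub>t| = (2t+1)^d\<close> and \<open>|G\<^sub>t| = |K\<^sub>t|^2\<close>.

  For the directions, \<open>P = G\<^sub>t\<close> is finite, symmetric, contains \<open>0\<close>, \<open>1\<close> and \<open>\<i>\<close>, and
  \<open>P + P \<subseteq> G\<^sub>2\<^sub>t\<close>. Group the points of \<open>P\<close> in the open upper half-plane into rays through the
  origin. If two rays carry \<open>m\<close> and \<open>n\<close> points, the sums \<open>u + v\<close> of a point on each determine at
  least \<open>m + n - 1\<close> directions strictly between the two rays, since the direction of \<open>u + v\<close> is a
  strictly monotone function of \<open>Im v / Im u\<close>, and the size of a quotient set \<open>Y / X\<close> of positive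
  reals is at least \<open>|X| + |Y| - 1\<close>. The same holds for the highest ray together with the positive
  reals of \<open>P\<close>, and for the lowest ray together with the negative ones. Summing over consecutive
  pairs of rays, and adding the directions of the rays themselves and the real direction, yields
  \<open>|P| - 1 = (2t+1)^(2d) - 1 \<ge> (2t)^(2d)\<close> directions in \<open>G\<^sub>2\<^sub>t\<close>.
\<close>

lemma map_poly_of_rat_add:
  "map_poly (of_rat :: rat \<Rightarrow> 'a::field_char_0) (p + q) = map_poly of_rat p + map_poly of_rat q"
  by (intro poly_eqI) (simp add: coeff_map_poly of_rat_add)

lemma map_poly_of_rat_mult:
  "map_poly (of_rat :: rat \<Rightarrow> 'a::field_char_0) (p * q) = map_poly of_rat p * map_poly of_rat q"
proof (induction p)
  case (pCons a p)
  have "map_poly (of_rat :: rat \<Rightarrow> 'a) (pCons a p * q) = map_poly of_rat (smult a q + pCons 0 (p * q))"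
    by simp
  also have "\<dots> = smult (of_rat a) (map_poly of_rat q) + pCons 0 (map_poly of_rat p * map_poly of_rat q)"
    by (simp add: map_poly_of_rat_add map_poly_smult map_poly_pCons of_rat_mult pCons.IH)
  also have "\<dots> = map_poly of_rat (pCons a p) * map_poly of_rat q"
    by (simp add: map_poly_pCons)
  finally show ?case .
qed simp

lemma irreducible_root_imp_degree_le:
  fixes p q :: "rat poly" and \<alpha> :: "'a::field_char_0"
  assumes "irreducible p" "poly (map_poly of_rat p) \<alpha> = 0"
    and "q \<noteq> 0" "poly (map_poly of_rat q) \<alpha> = 0"
  shows "degree p \<le> degree q"
proof (rule ccontr)
  assume "\<not> degree p \<le> degree q"
  then have "\<not> p dvd q"
    using dvd_imp_degree_le[OF _ \<open>q \<noteq> 0\<close>] by blast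
  then have "coprime p q"
    using field_poly_irreducible_imp_prime[OF \<open>irreducible p\<close>] by (intro prime_elem_imp_coprime)
  then obtain r s where rs: "r * p + s * q = 1"
    using bezout_coefficients_fst_snd[of p q] by auto
  have "poly (map_poly (of_rat :: rat \<Rightarrow> 'a) (r * p + s * q)) \<alpha> = 0"
    using assms(2,4) by (simp add: map_poly_of_rat_add map_poly_of_rat_mult)
  then show False
    unfolding rs by simp
qed

lemma irreducible_root_powers_independent:
  fixes p :: "rat poly" and \<alpha> :: "'a::field_char_0" and c :: "nat \<Rightarrow> rat"
  assumes "irreducible p" "poly (map_poly of_rat p) \<alpha> = 0"
    and "(\<Sum>j<degree p. of_rat (c j) * \<alpha> ^ j) = 0" "k < degree p"
  shows "c k = 0"
proof -
  define q where "q = (\<Sum>j<degree p. monom (c j) j)"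
  have coeff_q: "coeff q j = (if j < degree p then c j else 0)" for j
    by (simp add: q_def coeff_sum coeff_monom)
  have "map_poly (of_rat :: rat \<Rightarrow> 'a) q = (\<Sum>j<degree p. monom (of_rat (c j)) j)"
    by (intro poly_eqI) (simp add: coeff_map_poly coeff_q coeff_sum coeff_monom)
  then have "poly (map_poly of_rat q) \<alpha> = 0"
    using assms(3) by (simp add: poly_sum poly_monom)
  moreover have "degree q < degree p"
    using assms(4) by (intro degree_lessI) (auto simp: coeff_q)
  ultimately have "q = 0"
    using irreducible_root_imp_degree_le[OF assms(1,2)] by fastforce
  then show ?thesis
    using coeff_q[of k] assms(4) by simp
qed

lemma abs_of_int_le_of_nat_iff: "\<bar>real_of_int z\<bar> \<le> real t \<longleftrightarrow> z \<in> {-int t..int t}"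
proof -
  have "\<bar>real_of_int z\<bar> \<le> real t \<longleftrightarrow> \<bar>z\<bar> \<le> int t"
    by (metis of_int_abs of_int_le_iff of_int_of_nat_eq)
  also have "\<dots> \<longleftrightarrow> z \<in> {-int t..int t}"
    by auto
  finally show ?thesis .
qed

lemma Kset_eq_image:
  "Kset \<alpha> d (real t) = (\<lambda>a. \<Sum>k<d. of_int (a k) * \<alpha> ^ k) ` (\<Pi>\<^sub>E k\<in>{..<d}. {-int t..int t})"
proof (intro equalityI subsetI)
  fix x assume "x \<in> Kset \<alpha> d (real t)"
  then obtain a where a: "x = (\<Sum>k<d. of_int (a k) * \<alpha> ^ k)" "\<forall>k<d. a k \<in> {-int t..int t}"
    unfolding Kset_def by (auto simp: abs_of_int_le_of_nat_iff)
  then have "restrict a {..<d} \<in> (\<Pi>\<^sub>E k\<in>{..<d}. {-int t..int t})"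
    by auto
  moreover have "x = (\<Sum>k<d. of_int (restrict a {..<d} k) * \<alpha> ^ k)"
    using a(1) by simp
  ultimately show "x \<in> (\<lambda>a. \<Sum>k<d. of_int (a k) * \<alpha> ^ k) ` (\<Pi>\<^sub>E k\<in>{..<d}. {-int t..int t})"
    by blast
next
  fix x assume "x \<in> (\<lambda>a. \<Sum>k<d. of_int (a k) * \<alpha> ^ k) ` (\<Pi>\<^sub>E k\<in>{..<d}. {-int t..int t})"
  then obtain a where "a \<in> (\<Pi>\<^sub>E k\<in>{..<d}. {-int t..int t})" "x = (\<Sum>k<d. of_int (a k) * \<alpha> ^ k)"
    by blast
  moreover from this have "\<forall>k<d. real_of_int \<bar>a k\<bar> \<le> real t"
    by (auto simp: abs_of_int_le_of_nat_iff PiE_iff)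
  ultimately show "x \<in> Kset \<alpha> d (real t)"
    unfolding Kset_def by blast
qed

lemma finite_Kset: "finite (Kset \<alpha> d (real t))"
  unfolding Kset_eq_image by (intro finite_imageI finite_PiE) auto

lemma card_Kset:
  fixes p :: "rat poly"
  assumes "irreducible p" "poly (map_poly of_rat p) \<alpha> = 0" "d = degree p"
  shows "card (Kset \<alpha> d (real t)) = (2 * t + 1) ^ d"
proof -
  have "inj_on (\<lambda>a. \<Sum>k<d. of_int (a k) * \<alpha> ^ k) (\<Pi>\<^sub>E k\<in>{..<d}. {-int t..int t})"
  proof (rule inj_onI)
    fix a b
    assume ab: "a \<in> (\<Pi>\<^sub>E k\<in>{..<d}. {-int t..int t})" "b \<in> (\<Pi>\<^sub>E k\<in>{..<d}. {-int t..int t})"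
      and "(\<Sum>k<d. of_int (a k) * \<alpha> ^ k) = (\<Sum>k<d. of_int (b k) * \<alpha> ^ k)"
    then have "(\<Sum>k<d. of_int (a k - b k) * \<alpha> ^ k) = 0"
      by (simp add: left_diff_distrib sum_subtractf)
    then have "(\<Sum>k<degree p. of_rat (of_int (a k - b k)) * \<alpha> ^ k) = 0"
      using assms(3) by (simp add: of_rat_diff)
    then have "a k = b k" if "k < d" for k
      using irreducible_root_powers_independent[OF assms(1,2)] that assms(3) by fastforce
    with ab show "a = b"
      by (intro PiE_ext) auto
  qed
  moreover have "card {-int t..int t} = 2 * t + 1"
    by simp
  ultimately show ?thesis
    unfolding Kset_eq_image by (simp add: card_image card_PiE)
qed

lemma Kset_uminus: "x \<in> Kset \<alpha> d r \<Longrightarrow> -x \<in> Kset \<alpha> d r"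
  unfolding Kset_def by (force intro: exI[of _ "\<lambda>k. - _ k"] simp: sum_negf)

lemma Kset_add: "x \<in> Kset \<alpha> d r \<Longrightarrow> y \<in> Kset \<alpha> d s \<Longrightarrow> x + y \<in> Kset \<alpha> d (r + s)"
proof -
  assume "x \<in> Kset \<alpha> d r" "y \<in> Kset \<alpha> d s"
  then obtain a b where
    "x = (\<Sum>k<d. of_int (a k) * \<alpha> ^ k)" "\<forall>k<d. real_of_int \<bar>a k\<bar> \<le> r"
    "y = (\<Sum>k<d. of_int (b k) * \<alpha> ^ k)" "\<forall>k<d. real_of_int \<bar>b k\<bar> \<le> s"
    unfolding Kset_def by blast
  moreover have "real_of_int \<bar>a k + b k\<bar> \<le> real_of_int \<bar>a k\<bar> + real_of_int \<bar>b k\<bar>" for k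
    by linarith
  ultimately show "x + y \<in> Kset \<alpha> d (r + s)"
    unfolding Kset_def
    by (intro CollectI exI[of _ "\<lambda>k. a k + b k"]) (force simp: sum.distrib algebra_simps)
qed

lemma zero_in_Kset: "r \<ge> 0 \<Longrightarrow> 0 \<in> Kset \<alpha> d r"
  unfolding Kset_def by (intro CollectI exI[of _ "\<lambda>_. 0"]) simp

lemma one_in_Kset:
  assumes "r \<ge> 1" "d > 0"
  shows "1 \<in> Kset \<alpha> d r"
proof -
  have "(\<Sum>k<d. of_int (if k = 0 then 1 else 0) * \<alpha> ^ k) = (\<Sum>k<d. if k = 0 then 1 else 0)"
    by (intro sum.cong) auto
  also have "\<dots> = 1"
    using \<open>d > 0\<close> by (simp add: sum.delta)
  finally show ?thesis
    unfolding Kset_def using \<open>r \<ge> 1\<close>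
    by (intro CollectI exI[of _ "\<lambda>k. if k = 0 then 1 else 0"]) simp
qed

lemma mem_Gset_iff: "z \<in> Gset \<alpha> d r \<longleftrightarrow> Re z \<in> Kset \<alpha> d r \<and> Im z \<in> Kset \<alpha> d r"
  by (auto simp: Gset_def complex_eq_iff)

lemma Gset_eq_image: "Gset \<alpha> d r = (\<lambda>(x, y). Complex x y) ` (Kset \<alpha> d r \<times> Kset \<alpha> d r)"
proof (intro equalityI subsetI)
  fix z assume "z \<in> Gset \<alpha> d r"
  then show "z \<in> (\<lambda>(x, y). Complex x y) ` (Kset \<alpha> d r \<times> Kset \<alpha> d r)"
    by (intro rev_image_eqI[of "(Re z, Im z)"]) (simp_all add: mem_Gset_iff)
qed (auto simp: mem_Gset_iff)

lemma finite_Gset: "finite (Gset \<alpha> d (real t))"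
  by (simp add: Gset_eq_image finite_Kset)

lemma card_Gset: "card (Gset \<alpha> d r) = card (Kset \<alpha> d r) ^ 2"
  unfolding Gset_eq_image by (simp add: card_image inj_on_def card_cartesian_product power2_eq_square)

text \<open>On the open upper half-plane \<open>cot_arg\<close> is a strictly decreasing function of the argument, and
  \<open>cot_arg (u + v)\<close> is the mean of \<open>cot_arg u\<close> and \<open>cot_arg v\<close> weighted by \<open>Im u\<close> and \<open>Im v\<close>.\<close>

definition cot_arg :: "complex \<Rightarrow> real" where
  "cot_arg z = Re z / Im z"

lemma direction_upper: "Im w > 0 \<Longrightarrow> direction w = Arg w"
  unfolding direction_def using Arg_lt_pi[of w] by (intro rmod_unique[where n = 0]) auto

lemma direction_pos_real: "r > 0 \<Longrightarrow> direction (complex_of_real r) = 0"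
  by (simp add: direction_def)

lemma cot_arg_eq_cot_Arg: "z \<noteq> 0 \<Longrightarrow> cot_arg z = cot (Arg z)"
proof -
  assume "z \<noteq> 0"
  then have "Re z = cmod z * cos (Arg z)" "Im z = cmod z * sin (Arg z)"
    using arg_cong[OF cis_Arg, of z Re] arg_cong[OF cis_Arg, of z Im]
    by (simp_all add: sgn_div_norm field_simps)
  with \<open>z \<noteq> 0\<close> show ?thesis
    by (simp add: cot_arg_def cot_def)
qed

lemma card_cot_arg_upper_less_card_directions:
  assumes "finite Q" and "complex_of_real r \<in> Q" and "r > 0"
  shows "card (cot_arg ` {w\<in>Q. Im w > 0}) < card (direction ` (Q - {0}))"
proof -
  define W where "W = {w\<in>Q. Im w > 0}"
  have "cot_arg ` W = cot ` direction ` W"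
    unfolding image_image W_def
    by (intro image_cong refl) (auto simp: direction_upper intro!: cot_arg_eq_cot_Arg)
  then have "card (cot_arg ` W) \<le> card (direction ` W)"
    by (simp add: card_image_le W_def assms(1))
  also have "\<dots> < card (insert 0 (direction ` W))"
    using assms(1) by (subst card_insert_disjoint) (auto simp: W_def direction_upper dest!: Arg_lt_pi[THEN iffD2])
  also have "\<dots> \<le> card (direction ` (Q - {0}))"
    using assms direction_pos_real[of r]
    by (intro card_mono) (auto simp: W_def intro!: image_eqI[of 0 _ "complex_of_real r"])
  finally show ?thesis by (simp add: W_def)
qed

lemma card_quotients_ge:
  fixes X Y :: "real set"
  assumes "finite X" "finite Y" "X \<noteq> {}" "Y \<noteq> {}" "X \<subseteq> {0<..}" "Y \<subseteq> {0<..}"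
  shows "card X + card Y \<le> card ((\<lambda>(x, y). y / x) ` (X \<times> Y)) + 1"
proof -
  define x0 where "x0 = Min X"
  define y0 where "y0 = Min Y"
  have x0: "x0 \<in> X" "x0 > 0" "\<And>x. x \<in> X \<Longrightarrow> x0 \<le> x"
    using assms by (auto simp: x0_def)
  have y0: "y0 \<in> Y" "y0 > 0" "\<And>y. y \<in> Y \<Longrightarrow> y0 \<le> y"
    using assms by (auto simp: y0_def)
  define S1 where "S1 = (\<lambda>x. y0 / x) ` X"
  define S2 where "S2 = (\<lambda>y. y / x0) ` Y"
  \<comment> \<open>the two chains meet only in \<open>y0 / x0\<close>: \<open>y0 / x \<le> y0 / x0 \<le> y / x0\<close>\<close>
  have "S1 \<inter> S2 \<subseteq> {y0 / x0}"
  proof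
    fix q assume "q \<in> S1 \<inter> S2"
    then obtain x y where xy: "x \<in> X" "y \<in> Y" "q = y0 / x" "q = y / x0"
      by (auto simp: S1_def S2_def)
    have "x > 0"
      using xy assms(5) by auto
    then have "y0 / x \<le> y0 / x0"
      using xy x0 y0 by (intro divide_left_mono) auto
    moreover have "y0 / x0 \<le> y / x0"
      using xy x0 y0 by (intro divide_right_mono) auto
    ultimately have "y0 / x = y0 / x0"
      using xy by linarith
    with xy \<open>y0 > 0\<close> show "q \<in> {y0 / x0}"
      by simp
  qed
  then have "card (S1 \<inter> S2) \<le> 1"
    using card_mono[of "{y0 / x0}"] by simp
  moreover have "card S1 = card X" "card S2 = card Y"
    unfolding S1_def S2_def using x0 y0 assms(5)
    by (auto intro!: card_image inj_onI simp: field_simps subset_iff)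
  moreover have "card (S1 \<union> S2) \<le> card ((\<lambda>(x, y). y / x) ` (X \<times> Y))"
    using assms x0 y0 by (intro card_mono) (auto simp: S1_def S2_def)
  moreover have "card S1 + card S2 = card (S1 \<union> S2) + card (S1 \<inter> S2)"
    using assms by (intro card_Un_Int) (auto simp: S1_def S2_def)
  ultimately show ?thesis
    by linarith
qed

lemma card_ratio_image_ge:
  fixes f :: "'a \<Rightarrow> real" and h :: "'b \<Rightarrow> real" and g :: "real \<Rightarrow> 'c"
  assumes "finite A" "finite B" "A \<noteq> {}" "B \<noteq> {}"
    and "inj_on f A" "inj_on h B" "f ` A \<subseteq> {0<..}" "h ` B \<subseteq> {0<..}"
    and "inj_on g {0<..}"
  shows "card A + card B \<le> card ((\<lambda>(a, b). g (h b / f a)) ` (A \<times> B)) + 1"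
proof -
  let ?Q = "(\<lambda>(x, y). y / x) ` (f ` A \<times> h ` B)"
  have "(\<lambda>(a, b). g (h b / f a)) ` (A \<times> B) = g ` ?Q"
    by force
  moreover have "?Q \<subseteq> {0<..}"
    using assms(7,8) by (auto simp: image_subset_iff intro!: divide_pos_pos)
  then have "card (g ` ?Q) = card ?Q"
    using assms(9) by (intro card_image) (rule inj_on_subset)
  ultimately show ?thesis
    using card_quotients_ge[of "f ` A" "h ` B"] assms
    by (simp add: card_image)
qed

lemma cot_arg_add_of_real: "Im u \<noteq> 0 \<Longrightarrow> cot_arg (u + complex_of_real s) = cot_arg u + s / Im u"
  by (simp add: cot_arg_def add_divide_distrib)

lemma inj_on_Im_ray:
  assumes "\<And>u. u \<in> A \<Longrightarrow> Im u > 0 \<and> cot_arg u = a"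
  shows "inj_on Im A"
proof (rule inj_onI)
  fix u v assume "u \<in> A" "v \<in> A" "Im u = Im v"
  moreover from this have "Re u = a * Im u" "Re v = a * Im v"
    using assms by (force simp: cot_arg_def field_simps)+
  ultimately show "u = v"
    by (simp add: complex_eqI)
qed

lemma cot_arg_add_upper:
  assumes "Im u > 0" "Im v > 0"
  shows "cot_arg (u + v) = (cot_arg u + cot_arg v * (Im v / Im u)) / (1 + Im v / Im u)"
proof -
  have "cot_arg u + cot_arg v * (Im v / Im u) = Re (u + v) / Im u"
    "1 + Im v / Im u = Im (u + v) / Im u"
    using assms by (simp_all add: cot_arg_def add_divide_distrib)
  with assms show ?thesis
    by (simp add: cot_arg_def)
qed

lemma cot_arg_add_upper_between:
  assumes "Im u > 0" "Im v > 0" "cot_arg u < cot_arg v"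
  shows "cot_arg u < cot_arg (u + v)" "cot_arg (u + v) < cot_arg v"
proof -
  have avg: "Im (u + v) * cot_arg (u + v) = Im u * cot_arg u + Im v * cot_arg v"
    using assms(1,2) by (simp add: cot_arg_def)
  then have "Im (u + v) * (cot_arg (u + v) - cot_arg u) = Im v * (cot_arg v - cot_arg u)"
    "Im (u + v) * (cot_arg v - cot_arg (u + v)) = Im u * (cot_arg v - cot_arg u)"
    by (simp_all add: algebra_simps)
  moreover have "Im (u + v) > 0" "Im u * (cot_arg v - cot_arg u) > 0" "Im v * (cot_arg v - cot_arg u) > 0"
    using assms by simp_all
  ultimately have "cot_arg (u + v) - cot_arg u > 0" "cot_arg v - cot_arg (u + v) > 0"
    by (metis zero_less_mult_pos)+
  then show "cot_arg u < cot_arg (u + v)" "cot_arg (u + v) < cot_arg v"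
    by simp_all
qed

lemma card_cot_arg_sums_between:
  assumes "finite A" "finite B" "A \<noteq> {}" "B \<noteq> {}" "a < b"
    and "\<And>u. u \<in> A \<Longrightarrow> Im u > 0 \<and> cot_arg u = a"
    and "\<And>v. v \<in> B \<Longrightarrow> Im v > 0 \<and> cot_arg v = b"
  shows "card A + card B \<le> card ((\<lambda>(u, v). cot_arg (u + v)) ` (A \<times> B)) + 1"
proof -
  define g where "g r = (a + b * r) / (1 + r)" for r :: real
  have "inj_on g {0<..}"
  proof (rule inj_onI)
    fix r s :: real assume "r \<in> {0<..}" "s \<in> {0<..}" "g r = g s"
    then have "(b - a) * (r - s) = 0"
      by (simp add: g_def field_simps)
    with \<open>a < b\<close> show "r = s"
      by simp
  qed
  moreover have "(\<lambda>(u, v). cot_arg (u + v)) ` (A \<times> B) = (\<lambda>(u, v). g (Im v / Im u)) ` (A \<times> B)"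
    using assms(6,7) by (intro image_cong) (auto simp: g_def cot_arg_add_upper)
  moreover have "card A + card B \<le> card ((\<lambda>(u, v). g (Im v / Im u)) ` (A \<times> B)) + 1"
    using assms by (intro card_ratio_image_ge inj_on_Im_ray \<open>inj_on g {0<..}\<close>) auto
  ultimately show ?thesis
    by simp
qed

lemma card_cot_arg_add_reals:
  assumes "finite A" "finite S" "A \<noteq> {}" "S \<noteq> {}" "\<sigma> \<noteq> 0" "S \<subseteq> {0<..}"
    and "\<And>u. u \<in> A \<Longrightarrow> Im u > 0 \<and> cot_arg u = c"
  shows "card A + card S \<le> card ((\<lambda>(u, s). cot_arg (u + complex_of_real (\<sigma> * s))) ` (A \<times> S)) + 1"
proof -
  have "inj_on (\<lambda>r. c + \<sigma> * r) {0<..}"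
    using \<open>\<sigma> \<noteq> 0\<close> by (auto intro: inj_onI)
  moreover have "(\<lambda>(u, s). cot_arg (u + complex_of_real (\<sigma> * s))) ` (A \<times> S)
      = (\<lambda>(u, s). c + \<sigma> * (s / Im u)) ` (A \<times> S)"
  proof (intro image_cong refl, clarify)
    fix u s assume "u \<in> A"
    with assms(7)[of u] show "cot_arg (u + complex_of_real (\<sigma> * s)) = c + \<sigma> * (s / Im u)"
      by (simp del: of_real_mult add: cot_arg_add_of_real)
  qed
  ultimately show ?thesis
    using assms card_ratio_image_ge[of A S Im id "\<lambda>r. c + \<sigma> * r"]
    by (auto intro: inj_on_Im_ray[of A c])
qed

locale symmetric_sumset =
  fixes P Q :: "complex set"
  assumes finite_P: "finite P" and finite_Q: "finite Q"
    and uminus_mem: "z \<in> P \<Longrightarrow> -z \<in> P" and zero_mem: "0 \<in> P"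
    and add_mem: "u \<in> P \<Longrightarrow> v \<in> P \<Longrightarrow> u + v \<in> Q"
    and upper_nonempty: "\<exists>z\<in>P. Im z > 0"
    and pos_real_nonempty: "\<exists>r>0. complex_of_real r \<in> P"
begin

definition upper :: "complex set" where
  "upper = {z\<in>P. Im z > 0}"

definition pos_reals :: "real set" where
  "pos_reals = {r. r > 0 \<and> complex_of_real r \<in> P}"

definition ray :: "real \<Rightarrow> complex set" where
  "ray c = {z\<in>upper. cot_arg z = c}"

definition slopes :: "real set" where
  "slopes = cot_arg ` {w\<in>Q. Im w > 0}"

lemma finite_upper: "finite upper"
  using finite_P by (simp add: upper_def)

lemma finite_pos_reals: "finite pos_reals"
proof -
  have "pos_reals \<subseteq> Re ` P"
    by (force simp: pos_reals_def)
  then show ?thesis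
    using finite_P finite_subset by blast
qed

lemma finite_ray: "finite (ray c)"
  using finite_upper by (simp add: ray_def)

lemma finite_slopes: "finite slopes"
  using finite_Q by (simp add: slopes_def)

lemma mem_ray: "z \<in> ray c \<Longrightarrow> Im z > 0 \<and> cot_arg z = c"
  by (simp add: ray_def upper_def)

lemma ray_nonempty: "c \<in> cot_arg ` upper \<Longrightarrow> ray c \<noteq> {}"
  by (auto simp: ray_def)

lemma slopes_cot_arg_upper: "c \<in> cot_arg ` upper \<Longrightarrow> c \<in> slopes"
proof -
  assume "c \<in> cot_arg ` upper"
  then obtain u where "u \<in> P" "Im u > 0" "c = cot_arg u"
    by (auto simp: upper_def)
  moreover have "u + 0 \<in> Q"
    using add_mem[OF \<open>u \<in> P\<close> zero_mem] .
  ultimately show "c \<in> slopes"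
    by (auto simp: slopes_def)
qed

lemma card_P: "card P = 2 * (card upper + card pos_reals) + 1"
proof -
  define H where "H = {z\<in>P. Im z > 0 \<or> (Im z = 0 \<and> Re z > 0)}"
  have finite_H: "finite H"
    using finite_P by (simp add: H_def)
  have "H = upper \<union> complex_of_real ` pos_reals"
  proof (intro equalityI subsetI)
    fix z assume "z \<in> H"
    moreover have "Im z = 0 \<Longrightarrow> z = complex_of_real (Re z)"
      by (simp add: complex_eq_iff)
    ultimately show "z \<in> upper \<union> complex_of_real ` pos_reals"
      by (auto simp: H_def upper_def pos_reals_def intro!: image_eqI[of z _ "Re z"])
  qed (auto simp: H_def upper_def pos_reals_def)
  moreover have "upper \<inter> complex_of_real ` pos_reals = {}"
    by (auto simp: upper_def)
  ultimately have card_H: "card H = card upper + card pos_reals"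
    using finite_upper finite_pos_reals
    by (simp add: card_Un_disjoint card_image inj_on_def)
  have P_eq: "P = insert 0 (H \<union> uminus ` H)"
  proof (intro equalityI subsetI)
    fix z assume "z \<in> P"
    then have "z = 0 \<or> z \<in> H \<or> -z \<in> H"
      using uminus_mem[of z] by (auto simp: H_def complex_eq_iff)
    then show "z \<in> insert 0 (H \<union> uminus ` H)"
      by (auto intro: rev_image_eqI[of "-z"])
  next
    fix z assume "z \<in> insert 0 (H \<union> uminus ` H)"
    then show "z \<in> P"
      using zero_mem uminus_mem by (auto simp: H_def)
  qed
  have "H \<inter> uminus ` H = {}" "0 \<notin> H \<union> uminus ` H"
    by (auto simp: H_def)
  then have "card (insert 0 (H \<union> uminus ` H)) = 2 * card H + 1"
    using finite_H by (simp add: card_Un_disjoint card_image)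
  then show ?thesis
    using P_eq card_H by simp
qed

lemma pos_reals_nonempty: "pos_reals \<noteq> {}"
  using pos_real_nonempty by (auto simp: pos_reals_def)

lemma pos_reals_positive: "pos_reals \<subseteq> {0<..}"
  by (auto simp: pos_reals_def)

lemma card_slopes_between:
  assumes "a < b" "a \<in> cot_arg ` upper" "b \<in> cot_arg ` upper"
  shows "card (ray a) + card (ray b) \<le> card {x\<in>slopes. a < x \<and> x < b} + 1"
proof -
  have "(\<lambda>(u, v). cot_arg (u + v)) ` (ray a \<times> ray b) \<subseteq> {x\<in>slopes. a < x \<and> x < b}"
  proof (rule image_subsetI, clarify)
    fix u v assume "u \<in> ray a" "v \<in> ray b"
    then have "u \<in> P" "v \<in> P" "Im u > 0" "Im v > 0" "cot_arg u = a" "cot_arg v = b"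
      by (auto simp: ray_def upper_def)
    then show "cot_arg (u + v) \<in> slopes \<and> a < cot_arg (u + v) \<and> cot_arg (u + v) < b"
      using add_mem cot_arg_add_upper_between[of u v] \<open>a < b\<close> by (auto simp: slopes_def)
  qed
  then have "card ((\<lambda>(u, v). cot_arg (u + v)) ` (ray a \<times> ray b)) \<le> card {x\<in>slopes. a < x \<and> x < b}"
    by (intro card_mono) (simp_all add: finite_slopes)
  moreover have "card (ray a) + card (ray b) \<le> card ((\<lambda>(u, v). cot_arg (u + v)) ` (ray a \<times> ray b)) + 1"
    using assms by (intro card_cot_arg_sums_between) (simp_all add: finite_ray ray_nonempty mem_ray)
  ultimately show ?thesis
    by linarith
qed

lemma card_slopes_beyond:
  assumes "b \<in> cot_arg ` upper" "\<sigma> \<in> {-1, 1}"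
  shows "card (ray b) + card pos_reals \<le> card {x\<in>slopes. \<sigma> * (x - b) > 0} + 1"
proof -
  have "(\<lambda>(u, s). cot_arg (u + complex_of_real (\<sigma> * s))) ` (ray b \<times> pos_reals)
      \<subseteq> {x\<in>slopes. \<sigma> * (x - b) > 0}"
  proof (rule image_subsetI, clarify)
    fix u s assume "u \<in> ray b" "s \<in> pos_reals"
    then have "u \<in> P" "Im u > 0" "cot_arg u = b" "s > 0" "complex_of_real s \<in> P"
      by (auto simp: ray_def upper_def pos_reals_def)
    moreover have "complex_of_real (\<sigma> * s) \<in> P"
      using assms(2) uminus_mem[OF \<open>complex_of_real s \<in> P\<close>] \<open>complex_of_real s \<in> P\<close> by auto
    moreover have "\<sigma> * \<sigma> = 1"
      using assms(2) by auto
    ultimately have "u + complex_of_real (\<sigma> * s) \<in> {w\<in>Q. Im w > 0}"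
      "\<sigma> * (cot_arg (u + complex_of_real (\<sigma> * s)) - b) = s / Im u"
      using add_mem by (simp_all del: of_real_mult add: cot_arg_add_of_real mult.assoc[symmetric])
    then show "cot_arg (u + complex_of_real (\<sigma> * s)) \<in> slopes
        \<and> \<sigma> * (cot_arg (u + complex_of_real (\<sigma> * s)) - b) > 0"
      using \<open>s > 0\<close> \<open>Im u > 0\<close> by (simp add: slopes_def)
  qed
  then have "card ((\<lambda>(u, s). cot_arg (u + complex_of_real (\<sigma> * s))) ` (ray b \<times> pos_reals))
      \<le> card {x\<in>slopes. \<sigma> * (x - b) > 0}"
    by (intro card_mono) (simp_all add: finite_slopes)
  moreover have "card (ray b) + card pos_reals
      \<le> card ((\<lambda>(u, s). cot_arg (u + complex_of_real (\<sigma> * s))) ` (ray b \<times> pos_reals)) + 1"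
    using assms by (intro card_cot_arg_add_reals)
      (auto simp: finite_ray ray_nonempty mem_ray finite_pos_reals pos_reals_nonempty pos_reals_positive)
  ultimately show ?thesis
    by linarith
qed

lemma card_slopes_atMost:
  assumes "b \<in> slopes"
  shows "card {x\<in>slopes. x \<le> b} = card {x\<in>slopes. x < b} + 1"
proof -
  have "{x\<in>slopes. x \<le> b} = insert b {x\<in>slopes. x < b}"
    using assms by auto
  then show ?thesis
    by (simp add: finite_slopes)
qed

lemma card_slopes_lessThan_split:
  assumes "a < b"
  shows "card {x\<in>slopes. x < b} = card {x\<in>slopes. x \<le> a} + card {x\<in>slopes. a < x \<and> x < b}"
proof -
  have "{x\<in>slopes. x < b} = {x\<in>slopes. x \<le> a} \<union> {x\<in>slopes. a < x \<and> x < b}"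
    "{x\<in>slopes. x \<le> a} \<inter> {x\<in>slopes. a < x \<and> x < b} = {}"
    using assms by auto
  then show ?thesis
    by (simp add: card_Un_disjoint finite_slopes)
qed

text \<open>Induction over the rays from the lowest one up: the lowest ray together with the negative reals
  fills the slopes below it, and each new top ray adds its own slope and the slopes between it and the
  previous top ray.\<close>

lemma card_slopes_atMost_Max:
  assumes "finite C" "C \<noteq> {}" "C \<subseteq> cot_arg ` upper"
  shows "2 * card {u\<in>upper. cot_arg u \<in> C} + card pos_reals
      \<le> card {x\<in>slopes. x \<le> Max C} + card (ray (Max C))"
  using assms
proof (induction C rule: finite_linorder_max_induct)
  case empty
  then show ?case by simp
next
  case (insert b C)
  have b: "b \<in> cot_arg ` upper"
    using insert.prems by simp
  have Max_b: "Max (insert b C) = b"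
    using insert.hyps by (intro Max_eqI) (auto intro: less_imp_le)
  have card_atMost_b: "card {x\<in>slopes. x \<le> b} = card {x\<in>slopes. x < b} + 1"
    using card_slopes_atMost[OF slopes_cot_arg_upper[OF b]] .
  have rays_b: "{u\<in>upper. cot_arg u \<in> insert b C} = ray b \<union> {u\<in>upper. cot_arg u \<in> C}"
    by (auto simp: ray_def)
  show ?case
  proof (cases "C = {}")
    case True
    then show ?thesis
      using card_slopes_beyond[OF b, of "-1"] card_atMost_b rays_b Max_b by (simp add: ray_def)
  next
    case False
    define a where "a = Max C"
    have "a \<in> C"
      using False insert.hyps(1) by (simp add: a_def)
    then have a: "a < b" "a \<in> cot_arg ` upper"
      using insert by auto
    have IH: "2 * card {u\<in>upper. cot_arg u \<in> C} + card pos_reals \<le> card {x\<in>slopes. x \<le> a} + card (ray a)"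
      using insert.IH False insert.prems a_def by auto
    have "card {u\<in>upper. cot_arg u \<in> insert b C} = card (ray b) + card {u\<in>upper. cot_arg u \<in> C}"
      unfolding rays_b using insert.hyps finite_ray finite_upper
      by (intro card_Un_disjoint) (auto simp: ray_def)
    then show ?thesis
      using IH card_slopes_between[OF a b] card_slopes_lessThan_split[OF a(1)] card_atMost_b Max_b
      by simp
  qed
qed

lemma card_le_card_slopes: "card P \<le> card slopes + 2"
proof -
  define M where "M = Max (cot_arg ` upper)"
  have finite: "finite (cot_arg ` upper)" and nonempty: "cot_arg ` upper \<noteq> {}"
    using finite_upper upper_nonempty by (auto simp: upper_def)
  then have "M \<in> cot_arg ` upper"
    by (simp add: M_def)
  have "{u\<in>upper. cot_arg u \<in> cot_arg ` upper} = upper"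
    by auto
  then have "2 * card upper + card pos_reals \<le> card {x\<in>slopes. x \<le> M} + card (ray M)"
    using card_slopes_atMost_Max[OF finite nonempty] by (simp add: M_def)
  moreover have "card (ray M) + card pos_reals \<le> card {x\<in>slopes. M < x} + 1"
    using card_slopes_beyond[OF \<open>M \<in> cot_arg ` upper\<close>, of 1] by simp
  moreover have "card slopes = card {x\<in>slopes. x \<le> M} + card {x\<in>slopes. M < x}"
  proof -
    have "slopes = {x\<in>slopes. x \<le> M} \<union> {x\<in>slopes. M < x}"
      "{x\<in>slopes. x \<le> M} \<inter> {x\<in>slopes. M < x} = {}"
      by auto
    then show ?thesis
      by (metis (no_types, lifting) card_Un_disjoint finite_Un finite_slopes)
  qed
  ultimately show ?thesis
    unfolding card_P by simp
qed

lemma card_le_card_directions: "card P \<le> card (direction ` (Q - {0})) + 1"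
proof -
  obtain r where "r > 0" "complex_of_real r \<in> P"
    using pos_real_nonempty by blast
  then have "complex_of_real r \<in> Q"
    using add_mem[OF _ zero_mem] by fastforce
  then have "card slopes < card (direction ` (Q - {0}))"
    using card_cot_arg_upper_less_card_directions[OF finite_Q _ \<open>r > 0\<close>] by (simp add: slopes_def)
  then show ?thesis
    using card_le_card_slopes by linarith
qed

end

lemma symmetric_sumset_Gset:
  assumes "t > 0" "d > 0"
  shows "symmetric_sumset (Gset \<alpha> d (real t)) (Gset \<alpha> d (real (2*t)))"
proof
  have "x + y \<in> Kset \<alpha> d (real (2*t))" if "x \<in> Kset \<alpha> d (real t)" "y \<in> Kset \<alpha> d (real t)" for x y
    using Kset_add[OF that] by (metis mult_2 of_nat_add)
  then show "u + v \<in> Gset \<alpha> d (real (2*t))" if "u \<in> Gset \<alpha> d (real t)" "v \<in> Gset \<alpha> d (real t)" for u v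
    using that by (simp add: mem_Gset_iff)
  have "0 \<in> Kset \<alpha> d (real t)" "1 \<in> Kset \<alpha> d (real t)"
    using assms by (simp_all add: zero_in_Kset one_in_Kset)
  then show "\<exists>z\<in>Gset \<alpha> d (real t). Im z > 0" "\<exists>r>0. complex_of_real r \<in> Gset \<alpha> d (real t)"
    "0 \<in> Gset \<alpha> d (real t)"
    by (auto simp: mem_Gset_iff intro!: bexI[of _ \<i>] exI[of _ 1])
  show "finite (Gset \<alpha> d (real t))" "finite (Gset \<alpha> d (real (2*t)))"
    by (rule finite_Gset)+
qed (simp add: mem_Gset_iff Kset_uminus)

theorem mainTheorem4:
  fixes \<alpha> :: real and p :: "rat poly" and d :: nat
  assumes "algebraic_int \<alpha>"
    and "irreducible p" and "lead_coeff p = 1"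
    and "poly (map_poly of_rat p) \<alpha> = 0"
    and "d = degree p" and "d \<ge> 1"
  shows "\<forall>t::nat. t > 0 \<longrightarrow>
           card (Kset \<alpha> d (real t)) = (2*t+1)^d \<and>
           card (Gset \<alpha> d (real t)) = (2*t+1)^(2*d) \<and>
           card (direction ` (Gset \<alpha> d (real (2*t)) - {0})) \<ge> (2*t)^(2*d)"
proof (intro allI impI)
  fix t :: nat assume "t > 0"
  have card_K: "card (Kset \<alpha> d (real t)) = (2*t+1)^d"
    using card_Kset assms(2,4,5) .
  then have card_G: "card (Gset \<alpha> d (real t)) = (2*t+1)^(2*d)"
    by (simp add: card_Gset power_mult[symmetric] mult.commute)
  have "symmetric_sumset (Gset \<alpha> d (real t)) (Gset \<alpha> d (real (2*t)))"
    using \<open>t > 0\<close> \<open>d \<ge> 1\<close> by (intro symmetric_sumset_Gset) auto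
  then have "card (Gset \<alpha> d (real t)) \<le> card (direction ` (Gset \<alpha> d (real (2*t)) - {0})) + 1"
    by (rule symmetric_sumset.card_le_card_directions)
  moreover have "(2*t)^(2*d) < (2*t+1)^(2*d)"
    using \<open>d \<ge> 1\<close> by (intro power_strict_mono) auto
  ultimately show "card (Kset \<alpha> d (real t)) = (2*t+1)^d \<and>
           card (Gset \<alpha> d (real t)) = (2*t+1)^(2*d) \<and>
           card (direction ` (Gset \<alpha> d (real (2*t)) - {0})) \<ge> (2*t)^(2*d)"
    using card_K card_G by linarith
qed

end
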